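(* Let $n,m\ge1$, $r>0$, and let $\mathbf b_1,\dots,\mathbf b_m\in[0,\infty)^n$ be nonzero vectors. Put $D_{ij}=\frac{r}{m}(\mathbf b_i\cdot\mathbf b_j)$ and $\overline D=\max_{i,j}D_{ij}$. Define $\alpha^{(t)}\in\mathbb{R}^m$, $t\ge0$, by $\alpha^{(0)}_k=\sqrt{1/(\overline D m)}$ for all $k$, and, given $\alpha^{(t)}$: let $E_i^{(t)}=\sum_{j=1}^m D_{ij}\alpha^{(t)}_i\alpha^{(t)}_j-1$, choose $k=k_t$ with $|E^{(t)}_k|=\max_i|E^{(t)}_i|$, set $\alpha^{(t+1)}_i=\alpha^{(t)}_i$ for $i\neq k$ and $\alpha^{(t+1)}_k=\frac{-s+\sqrt{s^2+4D_{kk}}}{2D_{kk}}$ with $s=\sum_{i\ne k}D_{ik}\alpha^{(t)}_i$. Let $E^{(t)}=\sum_{i=1}^m|E^{(t)}_i|$. Then $\lim_{t\to\infty}E^{(t)}=0$. *)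

theory Defs
  imports "HOL-Analysis.Analysis"
begin

text \<open>Vectors in [0,inf)^n are modelled as functions nat => real, components indexed by l < n;
  the m vectors b_1..b_m are b 0, ..., b (m-1).\<close>

definition dotp :: "nat \<Rightarrow> (nat \<Rightarrow> real) \<Rightarrow> (nat \<Rightarrow> real) \<Rightarrow> real" where
  "dotp n x y = (\<Sum>l<n. x l * y l)"

definition Dmat :: "nat \<Rightarrow> nat \<Rightarrow> real \<Rightarrow> (nat \<Rightarrow> nat \<Rightarrow> real) \<Rightarrow> nat \<Rightarrow> nat \<Rightarrow> real" where
  "Dmat n m r b i j = r / real m * dotp n (b i) (b j)"

definition Dbar :: "nat \<Rightarrow> nat \<Rightarrow> real \<Rightarrow> (nat \<Rightarrow> nat \<Rightarrow> real) \<Rightarrow> real" where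
  "Dbar n m r b = Max {Dmat n m r b i j | i j. i < m \<and> j < m}"

definition Ecomp :: "nat \<Rightarrow> nat \<Rightarrow> real \<Rightarrow> (nat \<Rightarrow> nat \<Rightarrow> real) \<Rightarrow> (nat \<Rightarrow> real) \<Rightarrow> nat \<Rightarrow> real" where
  "Ecomp n m r b \<alpha> i = (\<Sum>j<m. Dmat n m r b i j * \<alpha> i * \<alpha> j) - 1"

definition Etot :: "nat \<Rightarrow> nat \<Rightarrow> real \<Rightarrow> (nat \<Rightarrow> nat \<Rightarrow> real) \<Rightarrow> (nat \<Rightarrow> real) \<Rightarrow> real" where
  "Etot n m r b \<alpha> = (\<Sum>i<m. \<bar>Ecomp n m r b \<alpha> i\<bar>)"

end

theory Submission imports Defs begin

text \<open>The update is exact minimisation of the convex potential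
  \<open>f(\<beta>) = \<beta>\<^sup>TD\<beta>/2 - \<Sum>\<^sub>i ln \<beta>\<^sub>i\<close> along coordinate \<open>k\<close>, whose critical points are
  exactly the solutions of \<open>E\<^sub>i = 0\<close>.  Each step lowers \<open>f\<close> by at least
  \<open>D\<^sub>k\<^sub>k/2 (\<alpha>\<^sub>k - \<alpha>\<^sub>k')\<^sup>2\<close>, and \<open>f\<close> is bounded below, so the step sizes tend to zero.
  Coercivity of \<open>f\<close> keeps all iterates in a compact box inside the positive orthant,
  on which \<open>|E\<^sub>k| \<le> B |\<alpha>\<^sub>k - \<alpha>\<^sub>k'|\<close>; hence the largest residual, and with it their sum,
  tends to zero.\<close>

lemma quadratic_root_eq:
  fixes d s :: real
  assumes "d > 0"
  defines "y \<equiv> (- s + sqrt (s\<^sup>2 + 4 * d)) / (2 * d)"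
  shows "d * y\<^sup>2 + s * y = 1" and "y > 0"
proof -
  define q where "q = sqrt (s\<^sup>2 + 4 * d)"
  have q2: "q\<^sup>2 = s\<^sup>2 + 4 * d" unfolding q_def using assms by simp
  have "sqrt (s\<^sup>2) < q" unfolding q_def using assms by (intro real_sqrt_less_mono) simp
  then have "q - s > 0" by auto
  moreover have y: "2 * d * y = q - s" unfolding y_def q_def using assms by simp
  ultimately show "y > 0" using assms by (simp add: zero_less_mult_iff)
  have "4 * d * (d * y\<^sup>2 + s * y) = (2 * d * y)\<^sup>2 + 2 * s * (2 * d * y)"
    by (simp add: algebra_simps power2_eq_square)
  also have "\<dots> = q\<^sup>2 - s\<^sup>2" unfolding y by (simp add: algebra_simps power2_eq_square)
  finally show "d * y\<^sup>2 + s * y = 1" using q2 assms by simp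
qed

lemma sq_minus_ln_ge:
  fixes d z :: real
  assumes "d > 0" "z > 0"
  shows "1 - 1 / (2 * d) \<le> d / 2 * z\<^sup>2 - ln z"
proof -
  have "(d * z - 1)\<^sup>2 / (2 * d) = d / 2 * z\<^sup>2 - z + 1 / (2 * d)"
    using assms by (simp add: field_simps power2_eq_square)
  moreover have "(d * z - 1)\<^sup>2 / (2 * d) \<ge> 0" using assms by simp
  ultimately show ?thesis using ln_le_minus_one[OF \<open>z > 0\<close>] by linarith
qed

lemma sq_minus_ln_le_bounds:
  fixes d z M :: real
  assumes "d > 0" "z > 0" and le: "d / 2 * z\<^sup>2 - ln z \<le> M"
  shows "exp (- M) \<le> z" and "z \<le> 1 + 2 * (1 + \<bar>M\<bar>) / d"
proof -
  have "d / 2 * z\<^sup>2 \<ge> 0" using assms by simp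
  then have "- M \<le> ln z" using le by linarith
  then show "exp (- M) \<le> z" using assms by (metis exp_le_cancel_iff exp_ln)
  have sq: "d * z\<^sup>2 \<le> 2 * \<bar>M\<bar> + 2 * z" using le ln_le_minus_one[OF \<open>z > 0\<close>] by linarith
  show "z \<le> 1 + 2 * (1 + \<bar>M\<bar>) / d"
  proof (cases "z \<le> 1")
    case True
    have "2 * (1 + \<bar>M\<bar>) / d \<ge> 0" using assms by simp
    with True show ?thesis by linarith
  next
    case False
    then have "2 * \<bar>M\<bar> \<le> 2 * \<bar>M\<bar> * z" by (simp add: mult_le_cancel_left1)
    then have "d * z * z \<le> 2 * (1 + \<bar>M\<bar>) * z"
      using sq by (simp add: power2_eq_square algebra_simps)
    then have "d * z \<le> 2 * (1 + \<bar>M\<bar>)" using assms by simp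
    then show ?thesis using assms by (simp add: field_simps)
  qed
qed

lemma tendsto_zero_if_square_le:
  fixes f g :: "nat \<Rightarrow> real"
  assumes "\<And>t. (f t)\<^sup>2 \<le> g t" and "g \<longlonglongrightarrow> 0"
  shows "f \<longlonglongrightarrow> 0"
proof -
  have "(\<lambda>t. (f t)\<^sup>2) \<longlonglongrightarrow> 0"
    by (rule tendsto_sandwich[of "\<lambda>_. 0" _ _ g]) (use assms in auto)
  then have "(\<lambda>t. sqrt ((f t)\<^sup>2)) \<longlonglongrightarrow> sqrt 0" by (rule tendsto_real_sqrt)
  then show ?thesis by (simp add: tendsto_rabs_zero_iff)
qed

lemma decseq_bounded_Suc_diff_tendsto_zero:
  fixes F :: "nat \<Rightarrow> real"
  assumes "decseq F" and "\<And>t. L \<le> F t"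
  shows "(\<lambda>t. F t - F (Suc t)) \<longlonglongrightarrow> 0"
proof -
  obtain l where "F \<longlonglongrightarrow> l" using decseq_convergent assms by blast
  then have "(\<lambda>t. F t - F (Suc t)) \<longlonglongrightarrow> l - l" by (intro tendsto_diff LIMSEQ_Suc)
  then show ?thesis by simp
qed

locale symmetric_scaling =
  fixes m :: nat and D :: "nat \<Rightarrow> nat \<Rightarrow> real"
  assumes sym: "\<And>i j. i < m \<Longrightarrow> j < m \<Longrightarrow> D i j = D j i"
    and nonneg: "\<And>i j. i < m \<Longrightarrow> j < m \<Longrightarrow> D i j \<ge> 0"
    and diag_pos: "\<And>i. i < m \<Longrightarrow> D i i > 0"
begin

definition quad_form :: "(nat \<Rightarrow> real) \<Rightarrow> real" where
  "quad_form \<beta> = (\<Sum>i<m. \<Sum>j<m. D i j * \<beta> i * \<beta> j)"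

definition potential :: "(nat \<Rightarrow> real) \<Rightarrow> real" where
  "potential \<beta> = quad_form \<beta> / 2 - (\<Sum>i<m. ln (\<beta> i))"

definition residual :: "(nat \<Rightarrow> real) \<Rightarrow> nat \<Rightarrow> real" where
  "residual \<beta> i = (\<Sum>j<m. D i j * \<beta> i * \<beta> j) - 1"

definition off_diag_sum :: "(nat \<Rightarrow> real) \<Rightarrow> nat \<Rightarrow> real" where
  "off_diag_sum \<beta> k = (\<Sum>i\<in>{..<m} - {k}. D i k * \<beta> i)"

definition coord_argmin :: "(nat \<Rightarrow> real) \<Rightarrow> nat \<Rightarrow> real" where
  "coord_argmin \<beta> k =
     (- off_diag_sum \<beta> k + sqrt ((off_diag_sum \<beta> k)\<^sup>2 + 4 * D k k)) / (2 * D k k)"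

lemma diag_bounds:
  obtains dmin dmax where "dmin > 0" "\<And>i. i < m \<Longrightarrow> dmin \<le> D i i \<and> D i i \<le> dmax"
proof
  let ?S = "insert 1 ((\<lambda>i. D i i) ` {..<m})"
  show "Min ?S > 0" using diag_pos by (subst Min_gr_iff) auto
  show "Min ?S \<le> D i i \<and> D i i \<le> (\<Sum>j<m. D j j)" if "i < m" for i
    using that nonneg by (auto intro: member_le_sum)
qed

lemma coord_argmin_pos: "k < m \<Longrightarrow> coord_argmin \<beta> k > 0"
  unfolding coord_argmin_def using quadratic_root_eq(2) diag_pos by blast

lemma off_diag_sum_eq:
  assumes "k < m"
  shows "off_diag_sum \<beta> k = 1 / coord_argmin \<beta> k - D k k * coord_argmin \<beta> k"
proof -
  have "D k k * (coord_argmin \<beta> k)\<^sup>2 + off_diag_sum \<beta> k * coord_argmin \<beta> k = 1"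
    unfolding coord_argmin_def using quadratic_root_eq(1) diag_pos assms by blast
  then show ?thesis
    using coord_argmin_pos[OF assms, of \<beta>] by (simp add: field_simps power2_eq_square)
qed

lemma column_sum_split:
  "k < m \<Longrightarrow> (\<Sum>i<m. D i k * \<beta> i) = D k k * \<beta> k + off_diag_sum \<beta> k"
  unfolding off_diag_sum_def by (subst sum.remove[of _ k]) auto

lemma potential_cong: "(\<And>i. i < m \<Longrightarrow> \<beta> i = \<gamma> i) \<Longrightarrow> potential \<beta> = potential \<gamma>"
  unfolding potential_def quad_form_def by (intro arg_cong2[where f = "(-)"] sum.cong) simp_all

lemma quad_form_update:
  assumes "k < m"
  shows "quad_form (\<beta>(k := y)) =
    quad_form \<beta> + 2 * (y - \<beta> k) * (\<Sum>i<m. D i k * \<beta> i) + D k k * (y - \<beta> k)\<^sup>2"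
proof -
  define \<delta> where "\<delta> = y - \<beta> k"
  have "quad_form (\<beta>(k := y)) = (\<Sum>i<m. \<Sum>j<m. D i j * \<beta> i * \<beta> j
      + (if j = k then D i k * \<beta> i * \<delta> else 0) + (if i = k then D k j * \<beta> j * \<delta> else 0)
      + (if i = k then if j = k then D k k * \<delta>\<^sup>2 else 0 else 0))"
    unfolding quad_form_def \<delta>_def
    by (intro sum.cong refl) (auto simp: algebra_simps power2_eq_square)
  also have "\<dots> = quad_form \<beta> + (\<Sum>i<m. D i k * \<beta> i * \<delta>) + (\<Sum>j<m. D k j * \<beta> j * \<delta>)
      + D k k * \<delta>\<^sup>2"
    using assms by (simp add: quad_form_def sum.distrib) (subst (1 2) sum.swap, simp add: sum.delta')
  also have "(\<Sum>j<m. D k j * \<beta> j * \<delta>) = (\<Sum>i<m. D i k * \<beta> i * \<delta>)"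
    using assms sym by (intro sum.cong) auto
  also have "(\<Sum>i<m. D i k * \<beta> i * \<delta>) = \<delta> * (\<Sum>i<m. D i k * \<beta> i)"
    by (simp add: sum_distrib_left algebra_simps)
  finally show ?thesis unfolding \<delta>_def by algebra
qed

lemma ln_sum_update:
  assumes "k < m"
  shows "(\<Sum>i<m. ln ((\<beta>(k := y)) i)) = (\<Sum>i<m. ln (\<beta> i)) + ln y - ln (\<beta> k)"
  using assms by (simp add: sum.remove[of "{..<m}" k] sum.cong[of _ _ "\<lambda>i. ln ((\<beta>(k := y)) i)"])

text \<open>With \<open>x = \<beta> k\<close> and \<open>off_diag_sum \<beta> k = 1/y - D\<^sub>k\<^sub>k y\<close> the decrease equals
  \<open>D\<^sub>k\<^sub>k/2 (x - y)\<^sup>2 + (x/y - 1 - ln (x/y))\<close>, and the second summand is nonnegative.\<close>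

lemma potential_coord_descent:
  fixes \<beta> :: "nat \<Rightarrow> real"
  assumes "k < m" and "\<beta> k > 0"
  defines "y \<equiv> coord_argmin \<beta> k"
  shows "D k k / 2 * (\<beta> k - y)\<^sup>2 \<le> potential \<beta> - potential (\<beta>(k := y))"
proof -
  define x d where "x = \<beta> k" and "d = D k k"
  have y: "y > 0" unfolding y_def using coord_argmin_pos assms by blast
  have "potential \<beta> - potential (\<beta>(k := y))
      = - (y - x) * (d * x + off_diag_sum \<beta> k) - d / 2 * (y - x)\<^sup>2 + ln y - ln x"
    unfolding potential_def quad_form_update[OF assms(1)] ln_sum_update[OF assms(1)]
      column_sum_split[OF assms(1)]
    by (simp add: x_def d_def field_simps)
  also have "\<dots> = d / 2 * (x - y)\<^sup>2 + (x / y - 1 - (ln x - ln y))"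
    unfolding off_diag_sum_eq[OF assms(1)] y_def[symmetric] d_def[symmetric]
    using y by (simp add: field_simps power2_eq_square)
  finally show ?thesis
    using ln_le_minus_one[of "x / y"] y assms(2) by (simp add: x_def d_def ln_div)
qed

lemma residual_coord_argmin:
  fixes \<beta> :: "nat \<Rightarrow> real"
  assumes "k < m"
  defines "y \<equiv> coord_argmin \<beta> k"
  shows "residual \<beta> k = (\<beta> k - y) * (D k k * \<beta> k + 1 / y)"
proof -
  have y: "y > 0" unfolding y_def using coord_argmin_pos assms by blast
  have "residual \<beta> k = \<beta> k * (\<Sum>i<m. D i k * \<beta> i) - 1"
    unfolding residual_def sum_distrib_left using assms sym
    by (intro arg_cong2[where f = "(-)"] sum.cong) (auto simp: algebra_simps)
  then show ?thesis
    unfolding column_sum_split[OF assms(1)] off_diag_sum_eq[OF assms(1)] y_def[symmetric]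
    using y by (simp add: field_simps power2_eq_square)
qed

lemma residual_sq_le_step:
  fixes \<beta> :: "nat \<Rightarrow> real"
  assumes "k < m" and "0 < \<beta> k" "\<beta> k \<le> A" "D k k \<le> dmax"
    and "0 < a" "a \<le> coord_argmin \<beta> k"
  shows "(residual \<beta> k)\<^sup>2 \<le> (dmax * A + 1 / a)\<^sup>2 * (\<beta> k - coord_argmin \<beta> k)\<^sup>2"
proof -
  define y where "y = coord_argmin \<beta> k"
  have y: "0 < y" unfolding y_def using coord_argmin_pos assms(1) by blast
  have "1 / y \<le> 1 / a" using assms y by (simp add: frac_le y_def)
  moreover have "D k k * \<beta> k \<le> dmax * A"
    using assms diag_pos[OF assms(1)] by (intro mult_mono) auto
  moreover have "0 \<le> D k k * \<beta> k + 1 / y" using diag_pos[OF assms(1)] assms(2) y by simp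
  ultimately have "(D k k * \<beta> k + 1 / y)\<^sup>2 \<le> (dmax * A + 1 / a)\<^sup>2"
    by (intro power_mono) auto
  then show ?thesis
    unfolding residual_coord_argmin[OF assms(1)] y_def[symmetric] power_mult_distrib
    by (simp add: mult.commute mult_left_mono)
qed

lemma separable_le_potential:
  assumes "\<And>i. i < m \<Longrightarrow> \<beta> i > 0"
  shows "(\<Sum>i<m. D i i / 2 * (\<beta> i)\<^sup>2 - ln (\<beta> i)) \<le> potential \<beta>"
proof -
  have "(\<Sum>i<m. D i i * (\<beta> i)\<^sup>2) \<le> quad_form \<beta>"
    unfolding quad_form_def
  proof (rule sum_mono)
    fix i assume "i \<in> {..<m}"
    then have "D i i * \<beta> i * \<beta> i \<le> (\<Sum>j<m. D i j * \<beta> i * \<beta> j)"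
      using nonneg assms[THEN less_imp_le]
      by (intro member_le_sum[where f = "\<lambda>j. D i j * \<beta> i * \<beta> j"]) auto
    then show "D i i * (\<beta> i)\<^sup>2 \<le> (\<Sum>j<m. D i j * \<beta> i * \<beta> j)"
      by (simp add: power2_eq_square mult.assoc)
  qed
  then show ?thesis
    unfolding potential_def sum_subtractf by (simp add: sum_divide_distrib[symmetric])
qed

lemma potential_bounded_below:
  assumes "\<And>i. i < m \<Longrightarrow> \<beta> i > 0"
  shows "(\<Sum>i<m. 1 - 1 / (2 * D i i)) \<le> potential \<beta>"
proof -
  have "(\<Sum>i<m. 1 - 1 / (2 * D i i)) \<le> (\<Sum>i<m. D i i / 2 * (\<beta> i)\<^sup>2 - ln (\<beta> i))"
    using sq_minus_ln_ge diag_pos assms by (intro sum_mono) auto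
  also have "\<dots> \<le> potential \<beta>" using assms by (rule separable_le_potential)
  finally show ?thesis .
qed

text \<open>Each summand of the lower bound is at least \<open>1 - 1/(2D\<^sub>i\<^sub>i)\<close> and, with
  \<open>1 - 1/(2D\<^sub>i\<^sub>i) < 1\<close>, a bound on \<open>f\<close> bounds every single summand.\<close>

lemma potential_sublevel_bounded:
  obtains a A where "a > 0"
    "\<And>\<beta> i. (\<And>j. j < m \<Longrightarrow> \<beta> j > 0) \<Longrightarrow> potential \<beta> \<le> M \<Longrightarrow> i < m \<Longrightarrow> a \<le> \<beta> i \<and> \<beta> i \<le> A"
proof -
  obtain dmin where dmin: "dmin > 0" "\<And>i. i < m \<Longrightarrow> dmin \<le> D i i"
    using diag_bounds by metis
  define c where "c i = 1 - 1 / (2 * D i i)" for i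
  define M' where "M' = M - (\<Sum>i<m. c i) + 1"
  have box: "exp (- M') \<le> \<beta> i \<and> \<beta> i \<le> 1 + 2 * (1 + \<bar>M'\<bar>) / dmin"
    if pos: "\<And>j. j < m \<Longrightarrow> \<beta> j > 0" and le: "potential \<beta> \<le> M" and i: "i < m" for \<beta> i
  proof -
    define h where "h j = D j j / 2 * (\<beta> j)\<^sup>2 - ln (\<beta> j)" for j
    have hc: "c j \<le> h j" if "j < m" for j
      unfolding c_def h_def using sq_minus_ln_ge diag_pos pos that by blast
    have "h i - c i \<le> (\<Sum>j<m. h j - c j)"
      using i hc by (intro member_le_sum[of i _ "\<lambda>j. h j - c j"]) auto
    also have "\<dots> \<le> M - (\<Sum>j<m. c j)"
      using separable_le_potential[of \<beta>, OF pos] le unfolding h_def sum_subtractf by simp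
    moreover have "c i \<le> 1" unfolding c_def using diag_pos[OF i] by simp
    ultimately have hM: "h i \<le> M'" unfolding M'_def by linarith
    note bounds = sq_minus_ln_le_bounds[OF diag_pos[OF i] pos[OF i] hM[unfolded h_def]]
    have "2 * (1 + \<bar>M'\<bar>) / D i i \<le> 2 * (1 + \<bar>M'\<bar>) / dmin"
      using dmin i diag_pos[OF i] by (intro divide_left_mono) auto
    then show ?thesis using bounds by linarith
  qed
  show thesis by (rule that[of "exp (- M')"]) (use box in auto)
qed

theorem residual_tendsto_zero:
  fixes \<alpha> :: "nat \<Rightarrow> nat \<Rightarrow> real" and k :: "nat \<Rightarrow> nat"
  assumes pos0: "\<And>i. i < m \<Longrightarrow> \<alpha> 0 i > 0" and k: "\<And>t. k t < m"
    and step: "\<And>t i. i < m \<Longrightarrow> \<alpha> (Suc t) i = ((\<alpha> t)(k t := coord_argmin (\<alpha> t) (k t))) i"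
  shows "(\<lambda>t. residual (\<alpha> t) (k t)) \<longlonglongrightarrow> 0"
proof -
  define F where "F t = potential (\<alpha> t)" for t
  define x y where "x t = \<alpha> t (k t)" and "y t = coord_argmin (\<alpha> t) (k t)" for t
  have pos: "\<alpha> t i > 0" if "i < m" for t i
    using that by (induction t arbitrary: i) (auto simp: pos0 step coord_argmin_pos k)
  have "F (Suc t) = potential ((\<alpha> t)(k t := y t))" for t
    unfolding F_def y_def using step by (intro potential_cong) simp
  then have descent: "D (k t) (k t) / 2 * (x t - y t)\<^sup>2 \<le> F t - F (Suc t)" for t
    using potential_coord_descent[of "k t" "\<alpha> t", OF k pos[OF k]]
    unfolding F_def x_def y_def by metis
  have "decseq F"
  proof (rule decseq_SucI)
    fix t
    have "0 \<le> D (k t) (k t) / 2 * (x t - y t)\<^sup>2" using diag_pos[OF k, of t] by simp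
    then show "F (Suc t) \<le> F t" using descent[of t] by linarith
  qed
  have F_lower: "(\<Sum>i<m. 1 - 1 / (2 * D i i)) \<le> F t" for t
    unfolding F_def by (rule potential_bounded_below) (rule pos)
  obtain dmin dmax where dmin: "dmin > 0"
    and dbounds: "\<And>i. i < m \<Longrightarrow> dmin \<le> D i i \<and> D i i \<le> dmax"
    using diag_bounds by metis
  obtain a A where a: "a > 0" and box: "\<And>\<beta> i. (\<And>j. j < m \<Longrightarrow> \<beta> j > 0) \<Longrightarrow>
      potential \<beta> \<le> F 0 \<Longrightarrow> i < m \<Longrightarrow> a \<le> \<beta> i \<and> \<beta> i \<le> A"
    using potential_sublevel_bounded by metis
  have in_box: "a \<le> \<alpha> t i \<and> \<alpha> t i \<le> A" if "i < m" for t i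
  proof -
    have "potential (\<alpha> t) \<le> F 0" using \<open>decseq F\<close> unfolding F_def decseq_def by simp
    then show ?thesis using box[of "\<alpha> t", OF pos _ that] by blast
  qed
  define C where "C = (dmax * A + 1 / a)\<^sup>2 * (2 / dmin)"
  have "(residual (\<alpha> t) (k t))\<^sup>2 \<le> C * (F t - F (Suc t))" for t
  proof -
    have "a \<le> y t" using in_box[of "k t" "Suc t", OF k] step[of "k t" t, OF k] by (simp add: y_def)
    then have "(residual (\<alpha> t) (k t))\<^sup>2 \<le> (dmax * A + 1 / a)\<^sup>2 * (x t - y t)\<^sup>2"
      unfolding x_def y_def using pos in_box dbounds k a by (intro residual_sq_le_step) auto
    also have "(x t - y t)\<^sup>2 \<le> 2 / dmin * (F t - F (Suc t))"
    proof -
      have "dmin / 2 * (x t - y t)\<^sup>2 \<le> D (k t) (k t) / 2 * (x t - y t)\<^sup>2"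
        using dbounds[OF k] by (intro mult_right_mono) auto
      then show ?thesis using descent[of t] dmin by (simp add: field_simps)
    qed
    finally show ?thesis unfolding C_def by (simp add: mult_left_mono mult.assoc)
  qed
  moreover have "(\<lambda>t. C * (F t - F (Suc t))) \<longlonglongrightarrow> 0"
    using decseq_bounded_Suc_diff_tendsto_zero[OF \<open>decseq F\<close> F_lower]
    by (rule tendsto_mult_right_zero)
  ultimately show ?thesis by (rule tendsto_zero_if_square_le)
qed

end

lemma Dmat_symmetric_scaling:
  assumes "r > 0" and "m \<ge> 1"
    and "\<And>i l. i < m \<Longrightarrow> l < n \<Longrightarrow> b i l \<ge> 0"
    and "\<And>i. i < m \<Longrightarrow> \<exists>l<n. b i l \<noteq> 0"
  shows "symmetric_scaling m (Dmat n m r b)"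
proof
  show "Dmat n m r b i j = Dmat n m r b j i" for i j
    unfolding Dmat_def dotp_def by (simp add: mult.commute)
  show "Dmat n m r b i j \<ge> 0" if "i < m" "j < m" for i j
    unfolding Dmat_def dotp_def using assms that by (intro mult_nonneg_nonneg sum_nonneg) auto
  show "Dmat n m r b i i > 0" if i: "i < m" for i
  proof -
    obtain l where "l < n" "b i l \<noteq> 0" using assms(4)[OF i] by auto
    then have "dotp n (b i) (b i) > 0"
      unfolding dotp_def by (intro sum_pos2[of _ l]) (auto simp: zero_less_mult_iff)
    then show ?thesis unfolding Dmat_def using assms by simp
  qed
qed

lemma Dbar_pos:
  assumes "symmetric_scaling m (Dmat n m r b)" and "m \<ge> 1"
  shows "Dbar n m r b > 0"
proof -
  have "finite {Dmat n m r b i j | i j. i < m \<and> j < m}"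
    by (rule finite_subset[of _ "(\<lambda>(i, j). Dmat n m r b i j) ` ({..<m} \<times> {..<m})"]) auto
  moreover have "0 < m" using assms(2) by simp
  ultimately have "Dmat n m r b 0 0 \<le> Dbar n m r b"
    unfolding Dbar_def by (intro Max_ge) blast+
  then show ?thesis using symmetric_scaling.diag_pos[OF assms(1)] assms(2) by force
qed

theorem lemma5:
  fixes n m :: nat and r :: real
    and b :: "nat \<Rightarrow> nat \<Rightarrow> real"
    and \<alpha> :: "nat \<Rightarrow> nat \<Rightarrow> real"
    and k :: "nat \<Rightarrow> nat"
  assumes "n \<ge> 1" and "m \<ge> 1" and "r > 0"
    and b_nonneg: "\<And>i l. i < m \<Longrightarrow> l < n \<Longrightarrow> b i l \<ge> 0"
    and b_nonzero: "\<And>i. i < m \<Longrightarrow> \<exists>l<n. b i l \<noteq> 0"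
    and init: "\<And>i. i < m \<Longrightarrow> \<alpha> 0 i = sqrt (1 / (Dbar n m r b * real m))"
    and k_range: "\<And>t. k t < m"
    and k_max: "\<And>t i. i < m \<Longrightarrow>
        \<bar>Ecomp n m r b (\<alpha> t) i\<bar> \<le> \<bar>Ecomp n m r b (\<alpha> t) (k t)\<bar>"
    and step_other: "\<And>t i. i < m \<Longrightarrow> i \<noteq> k t \<Longrightarrow> \<alpha> (Suc t) i = \<alpha> t i"
    and step_k: "\<And>t. \<alpha> (Suc t) (k t) =
        (let s = (\<Sum>i\<in>{..<m} - {k t}. Dmat n m r b i (k t) * \<alpha> t i);
             d = Dmat n m r b (k t) (k t)
         in (- s + sqrt (s\<^sup>2 + 4 * d)) / (2 * d))"
  shows "(\<lambda>t. Etot n m r b (\<alpha> t)) \<longlonglongrightarrow> 0"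
proof -
  interpret symmetric_scaling m "Dmat n m r b"
    by (rule Dmat_symmetric_scaling) (fact \<open>r > 0\<close> \<open>m \<ge> 1\<close> b_nonneg b_nonzero)+
  have "Dbar n m r b > 0" using Dbar_pos symmetric_scaling_axioms \<open>m \<ge> 1\<close> .
  then have pos0: "\<alpha> 0 i > 0" if "i < m" for i using init[OF that] \<open>m \<ge> 1\<close> by simp
  have step: "\<alpha> (Suc t) i = ((\<alpha> t)(k t := coord_argmin (\<alpha> t) (k t))) i" if "i < m" for t i
  proof (cases "i = k t")
    case True
    then show ?thesis using step_k[of t] by (simp add: coord_argmin_def off_diag_sum_def Let_def)
  next
    case False
    then show ?thesis using step_other[OF that] by simp
  qed
  have "Ecomp n m r b = residual" by (intro ext) (simp add: Ecomp_def residual_def)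
  then have "(\<lambda>t. Ecomp n m r b (\<alpha> t) (k t)) \<longlonglongrightarrow> 0"
    using residual_tendsto_zero[OF pos0 k_range step] by simp
  then have lim: "(\<lambda>t. real m * \<bar>Ecomp n m r b (\<alpha> t) (k t)\<bar>) \<longlonglongrightarrow> 0"
    by (intro tendsto_mult_right_zero tendsto_rabs_zero)
  have upper: "Etot n m r b (\<alpha> t) \<le> real m * \<bar>Ecomp n m r b (\<alpha> t) (k t)\<bar>" for t
  proof -
    have "Etot n m r b (\<alpha> t) \<le> (\<Sum>i<m. \<bar>Ecomp n m r b (\<alpha> t) (k t)\<bar>)"
      unfolding Etot_def using k_max by (intro sum_mono) simp
    then show ?thesis by simp
  qed
  have lower: "0 \<le> Etot n m r b (\<alpha> t)" for t unfolding Etot_def by (simp add: sum_nonneg)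
  show ?thesis
    by (rule tendsto_sandwich[OF always_eventually always_eventually tendsto_const lim])
      (simp_all add: lower upper)
qed

end
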